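(* Let $(\mathfrak{A},\mathfrak{A}_0)$ be a *-semisimple CQ*-algebra as in the context, let $X\in\mathfrak{A}$ and $\alpha\in\mathbb{C}$. The following are equivalent: (i) $\alpha$ is a generalized eigenvalue of $X$; (ii) there exist a nonzero $\varphi\in\mathcal{P}_{\mathfrak{A}_0}(\mathfrak{A})$ and $A\in\mathfrak{A}_0$ with $\varphi(A,A)>0$ such that $\varphi(XA-\alpha A,XA-\alpha A)=0$; (iii) there exists a nonzero $\varphi\in\mathcal{P}_{\mathfrak{A}_0}(\mathfrak{A})$ such that $\mathrm{Ker}(\pi_\varphi(X)-\alpha I_\varphi)\neq\{0\}$, where $\pi_\varphi$ is the GNS representation of $\varphi$.
   Context: Let $\mathfrak{A}_0$ be a unital C*-algebra with C*-norm $\|\cdot\|_0$ and unit $I$, and $\|\cdot\|$ another norm on $\mathfrak{A}_0$ with $\|A\|\le\|A\|_0$, $\|AB\|\le\|A\|\,\|B\|_0$, $\|A^*\|=\|A\|$. $\mathfrak{A}$ is the $\|\cdot\|$-completion of $\mathfrak{A}_0$, with $XA,AX,X^*$ ($X\in\mathfrak{A},A\in\mathfrak{A}_0$) defined as $\|\cdot\|$-limits of $A_nA$, $AA_n$, $A_n^*$ for $A_n\in\mathfrak{A}_0$, $A_n\to X$. $\mathcal{P}_{\mathfrak{A}_0}(\mathfrak{A})$ is the set of sesquilinear forms $\varphi$ on $\mathfrak{A}\times\mathfrak{A}$ such that (i) $\varphi(X,X)\ge0$ for all $X\in\mathfrak{A}$; (ii) $\varphi(XA,B)=\varphi(A,X^*B)$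 for all $X\in\mathfrak{A}$, $A,B\in\mathfrak{A}_0$; (iii) there is $\gamma>0$ with $|\varphi(X,Y)|\le\gamma\|X\|\|Y\|$ for all $X,Y$. $\mathcal{S}_{\mathfrak{A}_0}(\mathfrak{A})$ is the subset where one can take $\gamma\le1$. The CQ*-algebra is *-semisimple if for every $X\neq0$ there is $\varphi\in\mathcal{S}_{\mathfrak{A}_0}(\mathfrak{A})$ with $\varphi(X,X)>0$. GNS construction of $\varphi\in\mathcal{P}_{\mathfrak{A}_0}(\mathfrak{A})$: a Hilbert space $\mathcal{H}_\varphi$, a linear map $\lambda_\varphi:\mathfrak{A}_0\to\mathcal{H}_\varphi$ with dense range $\mathcal{D}_\varphi=\lambda_\varphi(\mathfrak{A}_0)$ and $(\lambda_\varphi(A)|\lambda_\varphi(B))=\varphi(A,B)$, and for each $X\in\mathfrak{A}$ a linear operator $\pi_\varphi(X):\mathcal{D}_\varphi\to\mathcal{H}_\varphi$ such that $\varphi(XA,YB)=(\pi_\varphi(X)\lambda_\varphi(A)|\pi_\varphi(Y)\lambda_\varphi(B))$ for all $X,Y\in\mathfrak{A}$, $A,B\in\mathfrak{A}_0$ (in particular $(\pi_\varphi(X)\lambda_\varphi(A)|\lambda_\varphi(B))=\varphi(XA,B)$); $I_\varphi$ is the identity of $\mathcal{D}_\varphi$, and $\mathrm{Ker}(\pi_\varphi(X)-\alpha I_\varphi)=\{\xi\in\mathcal{D}_\varphi:\pi_\varphi(X)\xi=\alpha\xi\}$. A complex number $\alpha$ is a generalized eigenvalue of $X\in\mathfrak{A}$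 if there exist a nonzero $\varphi\in\mathcal{P}_{\mathfrak{A}_0}(\mathfrak{A})$ (a generalized eigenvector of $X$) and $A\in\mathfrak{A}_0$ such that $\varphi(A,A)>0$ and $\varphi(XA-\alpha A,B)=0$ for all $B\in\mathfrak{A}_0$. *)

theory Defs
  imports "HOL-Analysis.Analysis" "HOL-Library.Complex_Order"
begin

text \<open>The completion A is modelled by a Banach space type 'a (its norm is the norm
  of the paper), A0 by a dense subset of it.\<close>

record 'a cqs =
  cq_A0   :: "'a set"
  cq_n0   :: "'a \<Rightarrow> real"
  cq_sc   :: "complex \<Rightarrow> 'a \<Rightarrow> 'a"
  cq_mul  :: "'a \<Rightarrow> 'a \<Rightarrow> 'a"
  cq_star :: "'a \<Rightarrow> 'a"
  cq_one  :: 'a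

definition cq_algebra :: "('a::banach) cqs \<Rightarrow> bool" where
  "cq_algebra Q \<longleftrightarrow>
    (let A0 = cq_A0 Q; n0 = cq_n0 Q; sc = cq_sc Q; mul = cq_mul Q; st = cq_star Q; I = cq_one Q in
     \<comment> \<open>complex vector space structure on A, compatible with the real one and the norm\<close>
     (\<forall>a b x. sc a (sc b x) = sc (a * b) x) \<and> (\<forall>x. sc 1 x = x) \<and>
     (\<forall>a x y. sc a (x + y) = sc a x + sc a y) \<and> (\<forall>a b x. sc (a + b) x = sc a x + sc b x) \<and>
     (\<forall>r x. sc (complex_of_real r) x = r *\<^sub>R x) \<and>
     (\<forall>a x. norm (sc a x) = cmod a * norm x) \<and>
     \<comment> \<open>A0 is a dense complex subspace of A (A is the norm-completion of A0)\<close>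
     0 \<in> A0 \<and> (\<forall>x\<in>A0. \<forall>y\<in>A0. x + y \<in> A0) \<and> (\<forall>a. \<forall>x\<in>A0. sc a x \<in> A0) \<and>
     closure A0 = UNIV \<and>
     \<comment> \<open>A0 is a unital *-algebra\<close>
     I \<in> A0 \<and>
     (\<forall>x\<in>A0. \<forall>y\<in>A0. mul x y \<in> A0) \<and> (\<forall>x\<in>A0. st x \<in> A0) \<and>
     (\<forall>x\<in>A0. \<forall>y\<in>A0. \<forall>z\<in>A0. mul (mul x y) z = mul x (mul y z)) \<and>
     (\<forall>x\<in>A0. \<forall>y\<in>A0. \<forall>z\<in>A0. mul (x + y) z = mul x z + mul y z \<and> mul z (x + y) = mul z x + mul z y) \<and>
     (\<forall>a. \<forall>x\<in>A0. \<forall>y\<in>A0. mul (sc a x) y = sc a (mul x y) \<and> mul x (sc a y) = sc a (mul x y)) \<and>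
     (\<forall>x\<in>A0. mul I x = x \<and> mul x I = x) \<and>
     (\<forall>x\<in>A0. st (st x) = x) \<and> (\<forall>x\<in>A0. \<forall>y\<in>A0. st (x + y) = st x + st y) \<and>
     (\<forall>a. \<forall>x\<in>A0. st (sc a x) = sc (cnj a) (st x)) \<and>
     (\<forall>x\<in>A0. \<forall>y\<in>A0. st (mul x y) = mul (st y) (st x)) \<and>
     \<comment> \<open>n0 is a complete C*-norm on A0\<close>
     (\<forall>x\<in>A0. 0 \<le> n0 x \<and> (n0 x = 0 \<longleftrightarrow> x = 0)) \<and>
     (\<forall>x\<in>A0. \<forall>y\<in>A0. n0 (x + y) \<le> n0 x + n0 y) \<and>
     (\<forall>a. \<forall>x\<in>A0. n0 (sc a x) = cmod a * n0 x) \<and>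
     (\<forall>x\<in>A0. \<forall>y\<in>A0. n0 (mul x y) \<le> n0 x * n0 y) \<and>
     (\<forall>x\<in>A0. n0 (mul (st x) x) = (n0 x)\<^sup>2) \<and>
     (\<forall>s. (\<forall>n. s n \<in> A0) \<and> (\<forall>e>0. \<exists>N. \<forall>m\<ge>N. \<forall>n\<ge>N. n0 (s m - s n) < e)
          \<longrightarrow> (\<exists>x\<in>A0. (\<lambda>n. n0 (s n - x)) \<longlonglongrightarrow> 0)) \<and>
     \<comment> \<open>compatibility of the two norms\<close>
     (\<forall>x\<in>A0. norm x \<le> n0 x) \<and>
     (\<forall>x\<in>A0. \<forall>y\<in>A0. norm (mul x y) \<le> norm x * n0 y) \<and>
     (\<forall>x\<in>A0. norm (st x) = norm x) \<and>
     \<comment> \<open>XA, AX, X* for X in A are the norm-limits of A_n A, A A_n, A_n*\<close>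
     (\<forall>X. \<forall>A\<in>A0. \<forall>s. (\<forall>n. s n \<in> A0) \<and> s \<longlonglongrightarrow> X \<longrightarrow>
          (\<lambda>n. mul (s n) A) \<longlonglongrightarrow> mul X A \<and> (\<lambda>n. mul A (s n)) \<longlonglongrightarrow> mul A X) \<and>
     (\<forall>X s. (\<forall>n. s n \<in> A0) \<and> s \<longlonglongrightarrow> X \<longrightarrow> (\<lambda>n. st (s n)) \<longlonglongrightarrow> st X))"

definition sesquilinear :: "'a cqs \<Rightarrow> ('a::banach \<Rightarrow> 'a \<Rightarrow> complex) \<Rightarrow> bool" where
  "sesquilinear Q \<phi> \<longleftrightarrow>
    (\<forall>x y z. \<phi> (x + y) z = \<phi> x z + \<phi> y z) \<and>
    (\<forall>a x z. \<phi> (cq_sc Q a x) z = a * \<phi> x z) \<and>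
    (\<forall>x y z. \<phi> x (y + z) = \<phi> x y + \<phi> x z) \<and>
    (\<forall>a x z. \<phi> x (cq_sc Q a z) = cnj a * \<phi> x z)"

definition P_forms :: "('a::banach) cqs \<Rightarrow> ('a \<Rightarrow> 'a \<Rightarrow> complex) set" where
  "P_forms Q = {\<phi>. sesquilinear Q \<phi> \<and>
      (\<forall>X. 0 \<le> \<phi> X X) \<and>
      (\<forall>X. \<forall>A\<in>cq_A0 Q. \<forall>B\<in>cq_A0 Q. \<phi> (cq_mul Q X A) B = \<phi> A (cq_mul Q (cq_star Q X) B)) \<and>
      (\<exists>\<gamma>>0. \<forall>X Y. cmod (\<phi> X Y) \<le> \<gamma> * norm X * norm Y)}"

definition S_forms :: "('a::banach) cqs \<Rightarrow> ('a \<Rightarrow> 'a \<Rightarrow> complex) set" where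
  "S_forms Q = {\<phi>. sesquilinear Q \<phi> \<and>
      (\<forall>X. 0 \<le> \<phi> X X) \<and>
      (\<forall>X. \<forall>A\<in>cq_A0 Q. \<forall>B\<in>cq_A0 Q. \<phi> (cq_mul Q X A) B = \<phi> A (cq_mul Q (cq_star Q X) B)) \<and>
      (\<exists>\<gamma>>0. \<gamma> \<le> 1 \<and> (\<forall>X Y. cmod (\<phi> X Y) \<le> \<gamma> * norm X * norm Y))}"

definition star_semisimple :: "('a::banach) cqs \<Rightarrow> bool" where
  "star_semisimple Q \<longleftrightarrow> (\<forall>X. X \<noteq> 0 \<longrightarrow> (\<exists>\<phi>\<in>S_forms Q. 0 < \<phi> X X))"

definition gen_eigenvalue :: "('a::banach) cqs \<Rightarrow> 'a \<Rightarrow> complex \<Rightarrow> bool" where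
  "gen_eigenvalue Q X \<alpha> \<longleftrightarrow>
    (\<exists>\<phi>\<in>P_forms Q. \<phi> \<noteq> (\<lambda>_ _. 0) \<and>
      (\<exists>A\<in>cq_A0 Q. 0 < \<phi> A A \<and>
         (\<forall>B\<in>cq_A0 Q. \<phi> (cq_mul Q X A - cq_sc Q \<alpha> A) B = 0)))"

text \<open>A complex Hilbert space is represented by a carrier H of complex-valued functions on
  'a with the pointwise linear operations and an inner product ip (linear in the first,
  conjugate linear in the second argument).  Every GNS Hilbert space of a form in P_forms
  admits such a realization, via xi |-> (B |-> (xi | lambda(B))).\<close>

definition hadd :: "('a \<Rightarrow> complex) \<Rightarrow> ('a \<Rightarrow> complex) \<Rightarrow> ('a \<Rightarrow> complex)" where
  "hadd f g = (\<lambda>b. f b + g b)"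

definition hscale :: "complex \<Rightarrow> ('a \<Rightarrow> complex) \<Rightarrow> ('a \<Rightarrow> complex)" where
  "hscale c f = (\<lambda>b. c * f b)"

definition hzero :: "'a \<Rightarrow> complex" where
  "hzero = (\<lambda>_. 0)"

definition hnorm :: "(('a \<Rightarrow> complex) \<Rightarrow> ('a \<Rightarrow> complex) \<Rightarrow> complex) \<Rightarrow> ('a \<Rightarrow> complex) \<Rightarrow> real" where
  "hnorm ip x = sqrt (Re (ip x x))"

definition complex_hilbert ::
  "('a \<Rightarrow> complex) set \<Rightarrow> (('a \<Rightarrow> complex) \<Rightarrow> ('a \<Rightarrow> complex) \<Rightarrow> complex) \<Rightarrow> bool" where
  "complex_hilbert H ip \<longleftrightarrow>
     hzero \<in> H \<and> (\<forall>x\<in>H. \<forall>y\<in>H. hadd x y \<in> H) \<and> (\<forall>c. \<forall>x\<in>H. hscale c x \<in> H) \<and>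
     (\<forall>x\<in>H. \<forall>y\<in>H. \<forall>z\<in>H. ip (hadd x y) z = ip x z + ip y z) \<and>
     (\<forall>c. \<forall>x\<in>H. \<forall>y\<in>H. ip (hscale c x) y = c * ip x y) \<and>
     (\<forall>x\<in>H. \<forall>y\<in>H. ip x y = cnj (ip y x)) \<and>
     (\<forall>x\<in>H. 0 \<le> ip x x \<and> (ip x x = 0 \<longrightarrow> x = hzero)) \<and>
     (\<forall>s. (\<forall>n. s n \<in> H) \<and>
          (\<forall>e>0. \<exists>N. \<forall>m\<ge>N. \<forall>n\<ge>N. hnorm ip (hadd (s m) (hscale (-1) (s n))) < e)
          \<longrightarrow> (\<exists>x\<in>H. (\<lambda>n. hnorm ip (hadd (s n) (hscale (-1) x))) \<longlonglongrightarrow> 0))"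

definition is_gns ::
  "('a::banach) cqs \<Rightarrow> ('a \<Rightarrow> 'a \<Rightarrow> complex) \<Rightarrow> ('a \<Rightarrow> complex) set \<Rightarrow>
   (('a \<Rightarrow> complex) \<Rightarrow> ('a \<Rightarrow> complex) \<Rightarrow> complex) \<Rightarrow>
   ('a \<Rightarrow> ('a \<Rightarrow> complex)) \<Rightarrow> ('a \<Rightarrow> ('a \<Rightarrow> complex) \<Rightarrow> ('a \<Rightarrow> complex)) \<Rightarrow> bool" where
  "is_gns Q \<phi> H ip lam rep \<longleftrightarrow>
     (let A0 = cq_A0 Q in
      complex_hilbert H ip \<and>
      (\<forall>A\<in>A0. lam A \<in> H) \<and>
      (\<forall>A\<in>A0. \<forall>B\<in>A0. lam (A + B) = hadd (lam A) (lam B)) \<and>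
      (\<forall>c. \<forall>A\<in>A0. lam (cq_sc Q c A) = hscale c (lam A)) \<and>
      (\<forall>\<xi>\<in>H. \<forall>e>0. \<exists>A\<in>A0. hnorm ip (hadd \<xi> (hscale (-1) (lam A))) < e) \<and>
      (\<forall>A\<in>A0. \<forall>B\<in>A0. ip (lam A) (lam B) = \<phi> A B) \<and>
      (\<forall>X. \<forall>\<xi>\<in>lam ` A0. rep X \<xi> \<in> H) \<and>
      (\<forall>X. \<forall>\<xi>\<in>lam ` A0. \<forall>\<eta>\<in>lam ` A0. rep X (hadd \<xi> \<eta>) = hadd (rep X \<xi>) (rep X \<eta>)) \<and>
      (\<forall>X c. \<forall>\<xi>\<in>lam ` A0. rep X (hscale c \<xi>) = hscale c (rep X \<xi>)) \<and>
      (\<forall>X Y. \<forall>A\<in>A0. \<forall>B\<in>A0.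
          ip (rep X (lam A)) (rep Y (lam B)) = \<phi> (cq_mul Q X A) (cq_mul Q Y B)) \<and>
      (\<forall>X. \<forall>A\<in>A0. \<forall>B\<in>A0. ip (rep X (lam A)) (lam B) = \<phi> (cq_mul Q X A) B))"

definition gns_ker ::
  "('a::banach) cqs \<Rightarrow> ('a \<Rightarrow> ('a \<Rightarrow> complex)) \<Rightarrow> ('a \<Rightarrow> ('a \<Rightarrow> complex) \<Rightarrow> ('a \<Rightarrow> complex)) \<Rightarrow>
   'a \<Rightarrow> complex \<Rightarrow> ('a \<Rightarrow> complex) set" where
  "gns_ker Q lam rep X \<alpha> = {\<xi> \<in> lam ` cq_A0 Q. rep X \<xi> = hscale \<alpha> \<xi>}"

end

theory Submission
  imports Defs
begin

(* (i) <-> (ii) is Cauchy-Schwarz plus continuity: phi(Z,Z) = 0 iff phi(Z,-) vanishes, and since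
   phi is bounded it suffices that phi(Z,-) vanishes on the dense subspace A0.
   For (i) -> (iii) a GNS construction is built explicitly: the Hilbert space is the completion
   of A for the seminorm sqrt(phi(x,x)), lambda(A) = phi(A,-) and pi(X) lambda(A) = lambda(XA),
   which is well defined because phi(XA,B) = phi(A,X*B).  The eigenvalue condition then says
   that lambda(A) is a nonzero eigenvector of pi(X).  Conversely, a nonzero eigenvector
   lambda(A) of pi(X) in any GNS construction gives phi(A,A) = |lambda(A)|^2 > 0 and
   phi(XA - alpha A, B) = (pi(X) lambda(A) - alpha lambda(A) | lambda(B)) = 0. *)

locale cq_star_algebra =
  fixes Q :: "('a::banach) cqs"
  assumes cq_algebra: "cq_algebra Q"
begin

lemma sc_of_real: "cq_sc Q (complex_of_real r) x = r *\<^sub>R x"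
  and sc_add_right: "cq_sc Q a (x + y) = cq_sc Q a x + cq_sc Q a y"
  and norm_sc: "norm (cq_sc Q a x) = cmod a * norm x"
  using cq_algebra by (simp_all add: cq_algebra_def Let_def)

lemma sc_minus_one: "cq_sc Q (-1) x = - x"
  using sc_of_real[of "-1" x] by simp

lemma sc_zero: "cq_sc Q 0 x = 0"
  using sc_of_real[of 0 x] by simp

lemma sc_diff_right: "cq_sc Q a (x - y) = cq_sc Q a x - cq_sc Q a y"
  using sc_add_right[of a "x - y" y] by (simp add: algebra_simps)

lemma zero_in_A0: "0 \<in> cq_A0 Q"
  and add_in_A0: "A \<in> cq_A0 Q \<Longrightarrow> B \<in> cq_A0 Q \<Longrightarrow> A + B \<in> cq_A0 Q"
  and sc_in_A0: "A \<in> cq_A0 Q \<Longrightarrow> cq_sc Q a A \<in> cq_A0 Q"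
  and closure_A0: "closure (cq_A0 Q) = UNIV"
  using cq_algebra by (simp_all add: cq_algebra_def Let_def)

lemma diff_in_A0: "A \<in> cq_A0 Q \<Longrightarrow> B \<in> cq_A0 Q \<Longrightarrow> A - B \<in> cq_A0 Q"
  using add_in_A0[of A "cq_sc Q (-1) B"] sc_in_A0[of B "-1"] by (simp add: sc_minus_one)

lemma A0_approx_seq:
  obtains s where "\<And>n. s n \<in> cq_A0 Q" "s \<longlonglongrightarrow> X"
  using closure_sequential[of X "cq_A0 Q"] closure_A0 by blast

lemma mul_limit:
  assumes "A \<in> cq_A0 Q" "\<And>n. s n \<in> cq_A0 Q" "s \<longlonglongrightarrow> X"
  shows "(\<lambda>n. cq_mul Q (s n) A) \<longlonglongrightarrow> cq_mul Q X A"
  using cq_algebra assms by (simp add: cq_algebra_def Let_def)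

lemma tendsto_sc:
  assumes "f \<longlonglongrightarrow> x"
  shows "(\<lambda>n. cq_sc Q a (f n)) \<longlonglongrightarrow> cq_sc Q a x"
proof -
  have "(\<lambda>n. norm (f n - x)) \<longlonglongrightarrow> 0"
    using assms by (simp add: tendsto_norm_zero_iff LIM_zero_iff)
  then have "(\<lambda>n. norm (cq_sc Q a (f n) - cq_sc Q a x)) \<longlonglongrightarrow> 0"
    by (simp add: sc_diff_right[symmetric] norm_sc tendsto_mult_right_zero)
  then show ?thesis
    by (simp add: tendsto_norm_zero_iff LIM_zero_iff)
qed

lemma mul_add_right:
  assumes "A \<in> cq_A0 Q" "B \<in> cq_A0 Q"
  shows "cq_mul Q X (A + B) = cq_mul Q X A + cq_mul Q X B"
proof -
  obtain s where s: "\<And>n. s n \<in> cq_A0 Q" "s \<longlonglongrightarrow> X"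
    using A0_approx_seq by blast
  have "cq_mul Q (s n) (A + B) = cq_mul Q (s n) A + cq_mul Q (s n) B" for n
    using cq_algebra s(1) assms by (simp add: cq_algebra_def Let_def)
  then have "(\<lambda>n. cq_mul Q (s n) (A + B)) \<longlonglongrightarrow> cq_mul Q X A + cq_mul Q X B"
    using tendsto_add[OF mul_limit[OF assms(1) s] mul_limit[OF assms(2) s]] by simp
  with mul_limit[OF add_in_A0[OF assms] s] show ?thesis
    using LIMSEQ_unique by blast
qed

lemma mul_sc_right:
  assumes "A \<in> cq_A0 Q"
  shows "cq_mul Q X (cq_sc Q a A) = cq_sc Q a (cq_mul Q X A)"
proof -
  obtain s where s: "\<And>n. s n \<in> cq_A0 Q" "s \<longlonglongrightarrow> X"
    using A0_approx_seq by blast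
  have "cq_mul Q (s n) (cq_sc Q a A) = cq_sc Q a (cq_mul Q (s n) A)" for n
    using cq_algebra s(1) assms by (simp add: cq_algebra_def Let_def)
  then have "(\<lambda>n. cq_mul Q (s n) (cq_sc Q a A)) \<longlonglongrightarrow> cq_sc Q a (cq_mul Q X A)"
    using tendsto_sc[OF mul_limit[OF assms s]] by simp
  with mul_limit[OF sc_in_A0[OF assms] s] show ?thesis
    using LIMSEQ_unique by blast
qed

lemma mul_diff_right:
  assumes "A \<in> cq_A0 Q" "B \<in> cq_A0 Q"
  shows "cq_mul Q X (A - B) = cq_mul Q X A - cq_mul Q X B"
  using mul_add_right[OF assms(1) sc_in_A0[OF assms(2)], of X "-1"] mul_sc_right[OF assms(2), of X "-1"]
  by (simp add: sc_minus_one)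

end

lemma quadratic_nonneg_imp_le:
  fixes P R m :: real
  assumes nonneg: "\<And>t. 0 \<le> P - 2 * t * m + t\<^sup>2 * m * R" and "0 \<le> m" "0 \<le> R"
  shows "m \<le> P * R"
proof (cases "m = 0")
  case True
  then show ?thesis
    using nonneg[of 0] \<open>0 \<le> R\<close> by simp
next
  case False
  with \<open>0 \<le> m\<close> have "m > 0" by simp
  show ?thesis
  proof (cases "R = 0")
    case True
    have "0 \<le> P - 2 * ((P + 1) / (2 * m)) * m"
      using nonneg[of "(P + 1) / (2 * m)"] True by simp
    also have "\<dots> = -1"
      using \<open>m > 0\<close> by (simp add: field_simps)
    finally show ?thesis by simp
  next
    case False
    with \<open>0 \<le> R\<close> have "R > 0" by simp
    have "0 \<le> P - 2 * (1 / R) * m + (1 / R)\<^sup>2 * m * R"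
      by (rule nonneg)
    also have "\<dots> = P - m / R"
      using \<open>R > 0\<close> by (simp add: field_simps power2_eq_square)
    finally show ?thesis
      using \<open>R > 0\<close> by (simp add: field_simps)
  qed
qed

definition form_seminorm :: "('a \<Rightarrow> 'a \<Rightarrow> complex) \<Rightarrow> 'a \<Rightarrow> real" where
  "form_seminorm \<phi> x = sqrt (Re (\<phi> x x))"

locale positive_form = cq_star_algebra +
  fixes \<phi> :: "'a::banach \<Rightarrow> 'a \<Rightarrow> complex"
  assumes sesquilinear: "sesquilinear Q \<phi>"
    and diag_nonneg: "0 \<le> \<phi> x x"
begin

lemma add_left: "\<phi> (x + y) z = \<phi> x z + \<phi> y z"
  and add_right: "\<phi> x (y + z) = \<phi> x y + \<phi> x z"
  and sc_left: "\<phi> (cq_sc Q a x) z = a * \<phi> x z"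
  and sc_right: "\<phi> x (cq_sc Q a z) = cnj a * \<phi> x z"
  using sesquilinear by (simp_all add: sesquilinear_def)

lemma minus_left: "\<phi> (- x) z = - \<phi> x z"
  using sc_left[of "-1" x z] by (simp add: sc_minus_one)

lemma minus_right: "\<phi> x (- z) = - \<phi> x z"
  using sc_right[of x "-1" z] by (simp add: sc_minus_one)

lemma diff_left: "\<phi> (x - y) z = \<phi> x z - \<phi> y z"
  using add_left[of x "- y" z] by (simp add: minus_left)

lemma diff_right: "\<phi> x (y - z) = \<phi> x y - \<phi> x z"
  using add_right[of x y "- z"] by (simp add: minus_right)

lemma zero_left: "\<phi> 0 z = 0"
  using diff_left[of 0 0 z] by simp

lemma zero_right: "\<phi> z 0 = 0"
  using diff_right[of z 0 0] by simp

lemmas form_simps = add_left add_right sc_left sc_right minus_left minus_right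
  diff_left diff_right zero_left zero_right

lemma Im_diag: "Im (\<phi> x x) = 0"
  and Re_diag_nonneg: "0 \<le> Re (\<phi> x x)"
  using diag_nonneg[of x] by (simp_all add: less_eq_complex_def)

lemma hermitian: "\<phi> y x = cnj (\<phi> x y)"
proof -
  have "\<phi> (x + y) (x + y) = \<phi> x x + \<phi> x y + \<phi> y x + \<phi> y y"
    by (simp add: form_simps)
  then have "Im (\<phi> x y) + Im (\<phi> y x) = 0"
    using Im_diag[of "x + y"] Im_diag[of x] Im_diag[of y] by simp
  moreover have "\<phi> (x + cq_sc Q \<i> y) (x + cq_sc Q \<i> y)
      = \<phi> x x - \<i> * \<phi> x y + \<i> * \<phi> y x + \<phi> y y"
    by (simp add: form_simps algebra_simps)
  then have "Re (\<phi> y x) - Re (\<phi> x y) = 0"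
    using Im_diag[of "x + cq_sc Q \<i> y"] Im_diag[of x] Im_diag[of y] by simp
  ultimately show ?thesis
    by (simp add: complex_eq_iff)
qed

lemma seminorm_nonneg: "0 \<le> form_seminorm \<phi> x"
  using Re_diag_nonneg[of x] by (simp add: form_seminorm_def)

lemma seminorm_square: "(form_seminorm \<phi> x)\<^sup>2 = Re (\<phi> x x)"
  using Re_diag_nonneg[of x] by (simp add: form_seminorm_def)

lemma Cauchy_Schwarz: "cmod (\<phi> x y) \<le> form_seminorm \<phi> x * form_seminorm \<phi> y"
proof -
  define a where "a = \<phi> x y"
  have "0 \<le> Re (\<phi> x x) - 2 * t * (cmod a)\<^sup>2 + t\<^sup>2 * (cmod a)\<^sup>2 * Re (\<phi> y y)" for t :: real
  proof -
    define c where "c = complex_of_real t * a"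
    have aa: "cnj a * a = (complex_of_real (cmod a))\<^sup>2"
      using complex_norm_square[of a] by (simp add: mult.commute)
    have "\<phi> (x - cq_sc Q c y) (x - cq_sc Q c y)
        = \<phi> x x - 2 * t * (cnj a * a) + t\<^sup>2 * (cnj a * a) * \<phi> y y"
      unfolding c_def by (simp add: form_simps hermitian[of y x] a_def algebra_simps power2_eq_square)
    then have "Re (\<phi> (x - cq_sc Q c y) (x - cq_sc Q c y))
        = Re (\<phi> x x) - 2 * t * (cmod a)\<^sup>2 + t\<^sup>2 * (cmod a)\<^sup>2 * Re (\<phi> y y)"
      unfolding aa by simp
    then show ?thesis
      using Re_diag_nonneg by metis
  qed
  then have "(cmod a)\<^sup>2 \<le> Re (\<phi> x x) * Re (\<phi> y y)"
    by (rule quadratic_nonneg_imp_le) (simp_all add: Re_diag_nonneg)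
  then have "sqrt ((cmod a)\<^sup>2) \<le> sqrt (Re (\<phi> x x) * Re (\<phi> y y))"
    using real_sqrt_le_mono by blast
  then show ?thesis
    by (simp add: form_seminorm_def a_def real_sqrt_mult)
qed

lemma seminorm_triangle: "form_seminorm \<phi> (x + y) \<le> form_seminorm \<phi> x + form_seminorm \<phi> y"
proof -
  have "Re (\<phi> (x + y) (x + y)) = Re (\<phi> x x) + 2 * Re (\<phi> x y) + Re (\<phi> y y)"
    using hermitian[of y x] by (simp add: form_simps)
  also have "\<dots> \<le> (form_seminorm \<phi> x + form_seminorm \<phi> y)\<^sup>2"
    using Cauchy_Schwarz[of x y] complex_Re_le_cmod[of "\<phi> x y"]
    by (simp add: seminorm_square power2_sum)
  finally show ?thesis
    using real_sqrt_le_mono seminorm_nonneg[of x] seminorm_nonneg[of y]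
    by (fastforce simp: form_seminorm_def[of \<phi> "x + y"])
qed

lemma seminorm_sc: "form_seminorm \<phi> (cq_sc Q c x) = cmod c * form_seminorm \<phi> x"
proof -
  have "cnj c * c = (cmod c)\<^sup>2"
    using complex_norm_square[of c] by (simp add: mult.commute)
  then have "\<phi> (cq_sc Q c x) (cq_sc Q c x) = (cmod c)\<^sup>2 * \<phi> x x"
    by (simp add: form_simps mult.assoc[symmetric])
  then show ?thesis
    by (simp add: form_seminorm_def real_sqrt_mult)
qed

lemma seminorm_minus: "form_seminorm \<phi> (- x) = form_seminorm \<phi> x"
  using seminorm_sc[of "-1" x] by (simp add: sc_minus_one)

lemma seminorm_diff_commute: "form_seminorm \<phi> (x - y) = form_seminorm \<phi> (y - x)"
  using seminorm_minus[of "x - y"] by simp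

lemma seminorm_zero: "form_seminorm \<phi> 0 = 0"
  by (simp add: form_seminorm_def zero_left)

lemma seminorm_diff_triangle:
  "form_seminorm \<phi> (x - z) \<le> form_seminorm \<phi> (x - y) + form_seminorm \<phi> (y - z)"
  using seminorm_triangle[of "x - y" "y - z"] by simp

lemma seminorm_reverse_triangle:
  "\<bar>form_seminorm \<phi> x - form_seminorm \<phi> y\<bar> \<le> form_seminorm \<phi> (x - y)"
  using seminorm_triangle[of "x - y" y] seminorm_triangle[of "y - x" x]
    seminorm_diff_commute[of x y] by simp

end

text \<open>The completion of \<open>'a\<close> for \<open>form_seminorm \<phi>\<close> is realised inside \<open>'a \<Rightarrow> complex\<close>:
  a \<open>\<phi>\<close>-Cauchy sequence \<open>s\<close> stands for \<open>\<lambda>B. lim (\<lambda>n. \<phi> (s n) B)\<close>, which exists and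
  determines \<open>s\<close> up to \<open>\<phi>\<close>-null sequences.\<close>

definition form_Cauchy :: "('a::ab_group_add \<Rightarrow> 'a \<Rightarrow> complex) \<Rightarrow> (nat \<Rightarrow> 'a) \<Rightarrow> bool" where
  "form_Cauchy \<phi> s \<longleftrightarrow> (\<forall>e>0. \<exists>N. \<forall>m\<ge>N. \<forall>n\<ge>N. form_seminorm \<phi> (s m - s n) < e)"

definition cauchy_represents ::
  "('a::ab_group_add \<Rightarrow> 'a \<Rightarrow> complex) \<Rightarrow> (nat \<Rightarrow> 'a) \<Rightarrow> ('a \<Rightarrow> complex) \<Rightarrow> bool" where
  "cauchy_represents \<phi> s f \<longleftrightarrow> form_Cauchy \<phi> s \<and> (\<forall>B. (\<lambda>n. \<phi> (s n) B) \<longlonglongrightarrow> f B)"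

definition form_completion :: "('a::ab_group_add \<Rightarrow> 'a \<Rightarrow> complex) \<Rightarrow> ('a \<Rightarrow> complex) set" where
  "form_completion \<phi> = {f. \<exists>s. cauchy_represents \<phi> s f}"

definition completion_inner ::
  "('a::ab_group_add \<Rightarrow> 'a \<Rightarrow> complex) \<Rightarrow> ('a \<Rightarrow> complex) \<Rightarrow> ('a \<Rightarrow> complex) \<Rightarrow> complex" where
  "completion_inner \<phi> f g =
     lim (\<lambda>n. \<phi> ((SOME s. cauchy_represents \<phi> s f) n) ((SOME t. cauchy_represents \<phi> t g) n))"

abbreviation completion_dist ::
  "('a::ab_group_add \<Rightarrow> 'a \<Rightarrow> complex) \<Rightarrow> ('a \<Rightarrow> complex) \<Rightarrow> ('a \<Rightarrow> complex) \<Rightarrow> real" where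
  "completion_dist \<phi> f g \<equiv> hnorm (completion_inner \<phi>) (hadd f (hscale (-1) g))"

lemma form_CauchyD:
  "form_Cauchy \<phi> s \<Longrightarrow> e > 0 \<Longrightarrow> \<exists>N. \<forall>m\<ge>N. \<forall>n\<ge>N. form_seminorm \<phi> (s m - s n) < e"
  by (simp add: form_Cauchy_def)

lemma cauchy_represents_in_completion: "cauchy_represents \<phi> s f \<Longrightarrow> f \<in> form_completion \<phi>"
  by (auto simp: form_completion_def)

lemma completion_memE:
  assumes "f \<in> form_completion \<phi>"
  obtains s where "cauchy_represents \<phi> s f"
  using assms by (auto simp: form_completion_def)

context positive_form
begin

lemma form_diff_bound:
  "cmod (\<phi> a b - \<phi> c d)
     \<le> form_seminorm \<phi> (a - c) * form_seminorm \<phi> b + form_seminorm \<phi> c * form_seminorm \<phi> (b - d)"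
proof -
  have "\<phi> a b - \<phi> c d = \<phi> (a - c) b + \<phi> c (b - d)"
    by (simp add: form_simps)
  then have "cmod (\<phi> a b - \<phi> c d) \<le> cmod (\<phi> (a - c) b) + cmod (\<phi> c (b - d))"
    by (simp add: norm_triangle_ineq)
  then show ?thesis
    using Cauchy_Schwarz[of "a - c" b] Cauchy_Schwarz[of c "b - d"] by linarith
qed

lemma form_Cauchy_bounded:
  assumes "form_Cauchy \<phi> s"
  obtains K where "K > 0" "\<And>n. form_seminorm \<phi> (s n) \<le> K"
proof -
  have "Cauchy (\<lambda>n. form_seminorm \<phi> (s n))"
    unfolding Cauchy_def dist_real_def
    using form_CauchyD[OF assms] seminorm_reverse_triangle by (meson order.strict_trans1)
  then have "Bseq (\<lambda>n. form_seminorm \<phi> (s n))"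
    using Cauchy_convergent convergent_imp_Bseq by blast
  then obtain K where "K > 0" "\<And>n. norm (form_seminorm \<phi> (s n)) \<le> K"
    using BseqE by blast
  then show ?thesis
    using that by (metis abs_le_D1 real_norm_def)
qed

lemma form_Cauchy_const: "form_Cauchy \<phi> (\<lambda>n. x)"
  by (simp add: form_Cauchy_def seminorm_zero)

lemma form_Cauchy_add:
  assumes "form_Cauchy \<phi> s" "form_Cauchy \<phi> t"
  shows "form_Cauchy \<phi> (\<lambda>n. s n + t n)"
  unfolding form_Cauchy_def
proof (intro allI impI)
  fix e :: real
  assume "e > 0"
  then obtain N1 N2 where
    N1: "\<forall>m\<ge>N1. \<forall>n\<ge>N1. form_seminorm \<phi> (s m - s n) < e / 2" and
    N2: "\<forall>m\<ge>N2. \<forall>n\<ge>N2. form_seminorm \<phi> (t m - t n) < e / 2"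
    using form_CauchyD[OF assms(1), of "e / 2"] form_CauchyD[OF assms(2), of "e / 2"] by auto
  have "form_seminorm \<phi> (s m + t m - (s n + t n)) < e" if "max N1 N2 \<le> m" "max N1 N2 \<le> n" for m n
    using N1 N2 that seminorm_triangle[of "s m - s n" "t m - t n"]
    by (fastforce simp: algebra_simps)
  then show "\<exists>N. \<forall>m\<ge>N. \<forall>n\<ge>N. form_seminorm \<phi> (s m + t m - (s n + t n)) < e"
    by blast
qed

lemma form_Cauchy_sc:
  assumes "form_Cauchy \<phi> s"
  shows "form_Cauchy \<phi> (\<lambda>n. cq_sc Q c (s n))"
  unfolding form_Cauchy_def
proof (intro allI impI)
  fix e :: real
  assume "e > 0"
  then have "e / (cmod c + 1) > 0"
    by (simp add: add_nonneg_pos)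
  then obtain N where N: "\<forall>m\<ge>N. \<forall>n\<ge>N. form_seminorm \<phi> (s m - s n) < e / (cmod c + 1)"
    using form_CauchyD[OF assms] by blast
  have "form_seminorm \<phi> (cq_sc Q c (s m) - cq_sc Q c (s n)) < e" if "N \<le> m" "N \<le> n" for m n
  proof -
    have "form_seminorm \<phi> (cq_sc Q c (s m) - cq_sc Q c (s n)) = cmod c * form_seminorm \<phi> (s m - s n)"
      by (simp add: sc_diff_right[symmetric] seminorm_sc)
    also have "\<dots> \<le> (cmod c + 1) * form_seminorm \<phi> (s m - s n)"
      by (simp add: mult_right_mono seminorm_nonneg)
    also have "\<dots> < e"
      using N that by (simp add: pos_less_divide_eq mult.commute add_nonneg_pos)
    finally show ?thesis .
  qed
  then show "\<exists>N. \<forall>m\<ge>N. \<forall>n\<ge>N. form_seminorm \<phi> (cq_sc Q c (s m) - cq_sc Q c (s n)) < e"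
    by blast
qed

lemma form_Cauchy_diff:
  "form_Cauchy \<phi> s \<Longrightarrow> form_Cauchy \<phi> t \<Longrightarrow> form_Cauchy \<phi> (\<lambda>n. s n - t n)"
  using form_Cauchy_add[OF _ form_Cauchy_sc[of t "-1"], of s] by (simp add: sc_minus_one)

lemma form_Cauchy_convergent:
  assumes "form_Cauchy \<phi> s" "form_Cauchy \<phi> t"
  shows "convergent (\<lambda>n. \<phi> (s n) (t n))"
proof -
  obtain K1 K2 where K: "K1 > 0" "K2 > 0"
    "\<And>n. form_seminorm \<phi> (s n) \<le> K1" "\<And>n. form_seminorm \<phi> (t n) \<le> K2"
    using form_Cauchy_bounded[OF assms(1)] form_Cauchy_bounded[OF assms(2)] by metis
  define K where "K = K1 + K2"
  have "K > 0" "\<And>n. form_seminorm \<phi> (s n) \<le> K" "\<And>n. form_seminorm \<phi> (t n) \<le> K"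
    using K seminorm_nonneg unfolding K_def by (smt (verit))+
  have "Cauchy (\<lambda>n. \<phi> (s n) (t n))"
    unfolding Cauchy_def dist_norm
  proof (intro allI impI)
    fix e :: real
    assume "e > 0"
    with \<open>K > 0\<close> obtain N1 N2 where
      N1: "\<forall>m\<ge>N1. \<forall>n\<ge>N1. form_seminorm \<phi> (s m - s n) < e / (4 * K)" and
      N2: "\<forall>m\<ge>N2. \<forall>n\<ge>N2. form_seminorm \<phi> (t m - t n) < e / (4 * K)"
      using form_CauchyD[OF assms(1), of "e / (4 * K)"] form_CauchyD[OF assms(2), of "e / (4 * K)"]
      by auto
    have "cmod (\<phi> (s m) (t m) - \<phi> (s n) (t n)) < e" if "max N1 N2 \<le> m" "max N1 N2 \<le> n" for m n
    proof -
      have "cmod (\<phi> (s m) (t m) - \<phi> (s n) (t n))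
          \<le> form_seminorm \<phi> (s m - s n) * form_seminorm \<phi> (t m)
            + form_seminorm \<phi> (s n) * form_seminorm \<phi> (t m - t n)"
        by (rule form_diff_bound)
      also have "\<dots> \<le> e / (4 * K) * K + K * (e / (4 * K))"
        using N1 N2 that \<open>K > 0\<close> \<open>e > 0\<close> \<open>\<And>n. form_seminorm \<phi> (s n) \<le> K\<close>
          \<open>\<And>n. form_seminorm \<phi> (t n) \<le> K\<close>
        by (intro add_mono mult_mono) (auto simp: seminorm_nonneg less_imp_le)
      also have "\<dots> < e"
        using \<open>K > 0\<close> \<open>e > 0\<close> by (simp add: field_simps)
      finally show ?thesis .
    qed
    then show "\<exists>M. \<forall>m\<ge>M. \<forall>n\<ge>M. cmod (\<phi> (s m) (t m) - \<phi> (s n) (t n)) < e"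
      by blast
  qed
  then show ?thesis
    using Cauchy_convergent by blast
qed

lemma form_Cauchy_represents:
  assumes "form_Cauchy \<phi> s"
  shows "cauchy_represents \<phi> s (\<lambda>B. lim (\<lambda>n. \<phi> (s n) B))"
  using form_Cauchy_convergent[OF assms form_Cauchy_const]
  by (simp add: cauchy_represents_def assms convergent_LIMSEQ_iff)

lemma cauchy_represents_const: "cauchy_represents \<phi> (\<lambda>n. x) (\<phi> x)"
  by (simp add: cauchy_represents_def form_Cauchy_const)

lemma cauchy_represents_add:
  "cauchy_represents \<phi> s f \<Longrightarrow> cauchy_represents \<phi> t g \<Longrightarrow>
    cauchy_represents \<phi> (\<lambda>n. s n + t n) (hadd f g)"
  by (auto simp: cauchy_represents_def hadd_def form_simps intro: form_Cauchy_add tendsto_add)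

lemma cauchy_represents_sc:
  "cauchy_represents \<phi> s f \<Longrightarrow> cauchy_represents \<phi> (\<lambda>n. cq_sc Q c (s n)) (hscale c f)"
  by (auto simp: cauchy_represents_def hscale_def form_simps intro: form_Cauchy_sc tendsto_mult)

lemma cauchy_represents_diff:
  "cauchy_represents \<phi> s f \<Longrightarrow> cauchy_represents \<phi> t g \<Longrightarrow>
    cauchy_represents \<phi> (\<lambda>n. s n - t n) (hadd f (hscale (-1) g))"
  using cauchy_represents_add[OF _ cauchy_represents_sc[of t g "-1"], of s f]
  by (simp add: sc_minus_one)

lemma weakly_null_imp_seminorm_null:
  assumes "form_Cauchy \<phi> d" and weak: "\<And>B. (\<lambda>n. \<phi> (d n) B) \<longlonglongrightarrow> 0"
  shows "(\<lambda>n. form_seminorm \<phi> (d n)) \<longlonglongrightarrow> 0"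
proof (rule LIMSEQ_I)
  fix r :: real
  assume "r > 0"
  obtain K where "K > 0" and K: "\<And>n. form_seminorm \<phi> (d n) \<le> K"
    using form_Cauchy_bounded[OF assms(1)] by blast
  with \<open>r > 0\<close> obtain N where N: "\<forall>m\<ge>N. \<forall>n\<ge>N. form_seminorm \<phi> (d m - d n) < r\<^sup>2 / (2 * K)"
    using form_CauchyD[OF assms(1), of "r\<^sup>2 / (2 * K)"] by auto
  from \<open>r > 0\<close> obtain N' where N': "\<forall>n\<ge>N'. cmod (\<phi> (d n) (d N)) < r\<^sup>2 / 2"
    using LIMSEQ_D[OF weak[of "d N"], of "r\<^sup>2 / 2"] by auto
  have "norm (form_seminorm \<phi> (d n) - 0) < r" if "max N N' \<le> n" for n
  proof -
    have "\<phi> (d n) (d n) = \<phi> (d n) (d n - d N) + \<phi> (d n) (d N)"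
      by (simp add: form_simps)
    then have "(form_seminorm \<phi> (d n))\<^sup>2 \<le> cmod (\<phi> (d n) (d n - d N)) + cmod (\<phi> (d n) (d N))"
      using complex_Re_le_cmod[of "\<phi> (d n) (d n)"] norm_triangle_ineq
      by (metis seminorm_square order_trans)
    also have "\<dots> \<le> K * (r\<^sup>2 / (2 * K)) + cmod (\<phi> (d n) (d N))"
    proof -
      have "form_seminorm \<phi> (d n) * form_seminorm \<phi> (d n - d N) \<le> K * (r\<^sup>2 / (2 * K))"
        using K[of n] N that \<open>K > 0\<close> by (intro mult_mono) (auto simp: seminorm_nonneg less_imp_le)
      then show ?thesis
        using Cauchy_Schwarz[of "d n" "d n - d N"] by simp
    qed
    also have "\<dots> < r\<^sup>2"
      using N'[rule_format, of n] that \<open>K > 0\<close> by simp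
    finally show ?thesis
      using \<open>r > 0\<close> seminorm_nonneg[of "d n"] by (simp add: power_less_imp_less_base)
  qed
  then show "\<exists>N. \<forall>n\<ge>N. norm (form_seminorm \<phi> (d n) - 0) < r"
    by blast
qed

lemma cauchy_represents_unique:
  assumes "cauchy_represents \<phi> s f" "cauchy_represents \<phi> t f"
  shows "(\<lambda>n. form_seminorm \<phi> (s n - t n)) \<longlonglongrightarrow> 0"
proof (rule weakly_null_imp_seminorm_null)
  show "form_Cauchy \<phi> (\<lambda>n. s n - t n)"
    using assms by (simp add: cauchy_represents_def form_Cauchy_diff)
  show "(\<lambda>n. \<phi> (s n - t n) B) \<longlonglongrightarrow> 0" for B
    using assms tendsto_diff[of "\<lambda>n. \<phi> (s n) B" "f B" _ "\<lambda>n. \<phi> (t n) B" "f B"]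
    by (simp add: cauchy_represents_def diff_left)
qed

lemma completion_inner_lim:
  assumes s: "cauchy_represents \<phi> s f" and t: "cauchy_represents \<phi> t g"
  shows "(\<lambda>n. \<phi> (s n) (t n)) \<longlonglongrightarrow> completion_inner \<phi> f g"
proof -
  define s' where "s' = (SOME s. cauchy_represents \<phi> s f)"
  define t' where "t' = (SOME t. cauchy_represents \<phi> t g)"
  have s': "cauchy_represents \<phi> s' f" and t': "cauchy_represents \<phi> t' g"
    unfolding s'_def t'_def using s t by (metis someI)+
  then have "(\<lambda>n. \<phi> (s' n) (t' n)) \<longlonglongrightarrow> completion_inner \<phi> f g"
    using form_Cauchy_convergent
    by (simp add: completion_inner_def s'_def t'_def cauchy_represents_def convergent_LIMSEQ_iff)
  moreover have "(\<lambda>n. \<phi> (s n) (t n) - \<phi> (s' n) (t' n)) \<longlonglongrightarrow> 0"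
  proof -
    obtain K1 K2 where K: "\<And>n. form_seminorm \<phi> (t n) \<le> K1" "\<And>n. form_seminorm \<phi> (s' n) \<le> K2"
      using form_Cauchy_bounded s' t unfolding cauchy_represents_def by metis
    have bound: "cmod (\<phi> (s n) (t n) - \<phi> (s' n) (t' n))
        \<le> form_seminorm \<phi> (s n - s' n) * K1 + K2 * form_seminorm \<phi> (t n - t' n)" for n
      using form_diff_bound[of "s n" "t n" "s' n" "t' n"]
        mult_left_mono[OF K(1)[of n] seminorm_nonneg[of "s n - s' n"]]
        mult_right_mono[OF K(2)[of n] seminorm_nonneg[of "t n - t' n"]]
      by linarith
    have "(\<lambda>n. form_seminorm \<phi> (s n - s' n) * K1 + K2 * form_seminorm \<phi> (t n - t' n))
        \<longlonglongrightarrow> 0"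
      using cauchy_represents_unique[OF s s'] cauchy_represents_unique[OF t t']
      by (auto intro: tendsto_add_zero tendsto_mult_left_zero tendsto_mult_right_zero)
    then show ?thesis
      by (rule Lim_null_comparison[OF always_eventually[OF allI[OF bound]]])
  qed
  ultimately show ?thesis
    using tendsto_add by fastforce
qed

lemma completion_dist_lim:
  assumes "cauchy_represents \<phi> s f" "cauchy_represents \<phi> t g"
  shows "(\<lambda>n. form_seminorm \<phi> (s n - t n)) \<longlonglongrightarrow> completion_dist \<phi> f g"
  using completion_inner_lim[OF cauchy_represents_diff[OF assms] cauchy_represents_diff[OF assms]]
  unfolding form_seminorm_def hnorm_def by (intro tendsto_real_sqrt tendsto_Re)

lemma completion_dist_nonneg:
  assumes "f \<in> form_completion \<phi>" "g \<in> form_completion \<phi>"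
  shows "0 \<le> completion_dist \<phi> f g"
proof -
  obtain s t where "cauchy_represents \<phi> s f" "cauchy_represents \<phi> t g"
    using assms by (meson completion_memE)
  then show ?thesis
    by (rule LIMSEQ_le_const[OF completion_dist_lim]) (simp add: seminorm_nonneg)
qed

lemma completion_dist_commute:
  assumes "f \<in> form_completion \<phi>" "g \<in> form_completion \<phi>"
  shows "completion_dist \<phi> f g = completion_dist \<phi> g f"
proof -
  obtain s t where s: "cauchy_represents \<phi> s f" and t: "cauchy_represents \<phi> t g"
    using assms by (meson completion_memE)
  have "(\<lambda>n. form_seminorm \<phi> (s n - t n)) \<longlonglongrightarrow> completion_dist \<phi> g f"
    using completion_dist_lim[OF t s] by (simp add: seminorm_diff_commute)
  then show ?thesis
    using LIMSEQ_unique[OF completion_dist_lim[OF s t]] by blast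
qed

lemma completion_dist_triangle:
  assumes "f \<in> form_completion \<phi>" "g \<in> form_completion \<phi>" "h \<in> form_completion \<phi>"
  shows "completion_dist \<phi> f h \<le> completion_dist \<phi> f g + completion_dist \<phi> g h"
proof -
  obtain s t u where s: "cauchy_represents \<phi> s f" and t: "cauchy_represents \<phi> t g"
    and u: "cauchy_represents \<phi> u h"
    using assms by (meson completion_memE)
  show ?thesis
    by (rule tendsto_le[OF trivial_limit_sequentially
          tendsto_add[OF completion_dist_lim[OF s t] completion_dist_lim[OF t u]]
          completion_dist_lim[OF s u]])
      (intro always_eventually allI seminorm_diff_triangle)
qed

lemma embed_in_completion: "\<phi> x \<in> form_completion \<phi>"
  by (rule cauchy_represents_in_completion[OF cauchy_represents_const])

lemma completion_dist_embed: "completion_dist \<phi> (\<phi> x) (\<phi> y) = form_seminorm \<phi> (x - y)"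
proof -
  have "(\<lambda>n. form_seminorm \<phi> (x - y)) \<longlonglongrightarrow> completion_dist \<phi> (\<phi> x) (\<phi> y)"
    by (rule completion_dist_lim[OF cauchy_represents_const cauchy_represents_const])
  then show ?thesis
    using LIMSEQ_unique[OF tendsto_const] by (metis (no_types))
qed

lemma completion_dist_tendsto:
  assumes "cauchy_represents \<phi> s f"
  shows "(\<lambda>k. completion_dist \<phi> (\<phi> (s k)) f) \<longlonglongrightarrow> 0"
proof (rule LIMSEQ_I)
  fix e :: real
  assume "e > 0"
  then obtain N where N: "\<forall>m\<ge>N. \<forall>n\<ge>N. form_seminorm \<phi> (s m - s n) < e / 2"
    using assms form_CauchyD[of \<phi> s "e / 2"] by (auto simp: cauchy_represents_def)
  have "norm (completion_dist \<phi> (\<phi> (s k)) f - 0) < e" if "N \<le> k" for k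
  proof -
    have "\<forall>n\<ge>N. form_seminorm \<phi> (s k - s n) \<le> e / 2"
      using N that by (auto intro: less_imp_le)
    then have "completion_dist \<phi> (\<phi> (s k)) f \<le> e / 2"
      by (intro LIMSEQ_le_const2[OF completion_dist_lim[OF cauchy_represents_const assms]]) blast
    moreover have "0 \<le> completion_dist \<phi> (\<phi> (s k)) f"
      by (rule completion_dist_nonneg[OF embed_in_completion cauchy_represents_in_completion[OF assms]])
    ultimately show ?thesis
      using \<open>e > 0\<close> by simp
  qed
  then show "\<exists>N. \<forall>k\<ge>N. norm (completion_dist \<phi> (\<phi> (s k)) f - 0) < e"
    by blast
qed

lemma embed_approx:
  assumes "f \<in> form_completion \<phi>" "e > 0"
  shows "\<exists>x. completion_dist \<phi> (\<phi> x) f < e"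
proof -
  obtain s where "cauchy_represents \<phi> s f"
    using assms(1) by (rule completion_memE)
  from order_tendstoD(2)[OF completion_dist_tendsto[OF this] assms(2)] show ?thesis
    by (auto dest: eventually_happens)
qed

lemma approximants_form_Cauchy:
  assumes in_completion: "\<And>k. f k \<in> form_completion \<phi>"
    and Cauchy: "\<forall>e>0. \<exists>N. \<forall>m\<ge>N. \<forall>n\<ge>N. completion_dist \<phi> (f m) (f n) < e"
    and approx: "\<And>k. completion_dist \<phi> (\<phi> (a k)) (f k) < inverse (real (Suc k))"
  shows "form_Cauchy \<phi> a"
  unfolding form_Cauchy_def
proof (intro allI impI)
  fix e :: real
  assume "e > 0"
  then obtain N1 where N1: "\<forall>n\<ge>N1. inverse (real (Suc n)) < e / 3"
    using order_tendstoD(2)[OF LIMSEQ_inverse_real_of_nat, of "e / 3"]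
    by (auto simp: eventually_sequentially)
  from \<open>e > 0\<close> obtain N2 where N2: "\<forall>m\<ge>N2. \<forall>n\<ge>N2. completion_dist \<phi> (f m) (f n) < e / 3"
    using Cauchy by (meson zero_less_divide_iff zero_less_numeral)
  have "form_seminorm \<phi> (a m - a n) < e" if "max N1 N2 \<le> m" "max N1 N2 \<le> n" for m n
  proof -
    have "form_seminorm \<phi> (a m - a n)
        \<le> completion_dist \<phi> (\<phi> (a m)) (f m) + completion_dist \<phi> (f m) (f n)
          + completion_dist \<phi> (f n) (\<phi> (a n))"
      using completion_dist_triangle[of "\<phi> (a m)" "f m" "\<phi> (a n)"]
        completion_dist_triangle[of "f m" "f n" "\<phi> (a n)"]
      by (simp add: completion_dist_embed embed_in_completion in_completion)
    moreover have "completion_dist \<phi> (f n) (\<phi> (a n)) = completion_dist \<phi> (\<phi> (a n)) (f n)"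
      by (simp add: completion_dist_commute embed_in_completion in_completion)
    moreover have "inverse (real (Suc m)) < e / 3" "inverse (real (Suc n)) < e / 3"
      "completion_dist \<phi> (f m) (f n) < e / 3"
      using N1 N2 that by auto
    ultimately show ?thesis
      using approx[of m] approx[of n] by linarith
  qed
  then show "\<exists>N. \<forall>m\<ge>N. \<forall>n\<ge>N. form_seminorm \<phi> (a m - a n) < e"
    by blast
qed

lemma completion_complete:
  assumes in_completion: "\<forall>k. f k \<in> form_completion \<phi>"
    and Cauchy: "\<forall>e>0. \<exists>N. \<forall>m\<ge>N. \<forall>n\<ge>N. completion_dist \<phi> (f m) (f n) < e"
  shows "\<exists>g\<in>form_completion \<phi>. (\<lambda>k. completion_dist \<phi> (f k) g) \<longlonglongrightarrow> 0"
proof -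
  have "\<exists>x. completion_dist \<phi> (\<phi> x) (f k) < inverse (real (Suc k))" for k
    using embed_approx in_completion by simp
  then obtain a where a: "\<And>k. completion_dist \<phi> (\<phi> (a k)) (f k) < inverse (real (Suc k))"
    by metis
  have "form_Cauchy \<phi> a"
    using in_completion by (intro approximants_form_Cauchy[OF _ Cauchy a]) blast
  then have g: "cauchy_represents \<phi> a (\<lambda>B. lim (\<lambda>n. \<phi> (a n) B))" (is "cauchy_represents \<phi> a ?g")
    by (rule form_Cauchy_represents)
  have upper: "completion_dist \<phi> (f k) ?g \<le> inverse (real (Suc k)) + completion_dist \<phi> (\<phi> (a k)) ?g"
    for k
  proof -
    have "completion_dist \<phi> (f k) ?g
        \<le> completion_dist \<phi> (f k) (\<phi> (a k)) + completion_dist \<phi> (\<phi> (a k)) ?g"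
      using g by (simp add: completion_dist_triangle embed_in_completion in_completion
          cauchy_represents_in_completion)
    moreover have "completion_dist \<phi> (f k) (\<phi> (a k)) = completion_dist \<phi> (\<phi> (a k)) (f k)"
      by (simp add: completion_dist_commute embed_in_completion in_completion)
    ultimately show ?thesis
      using a[of k] by linarith
  qed
  have lower: "0 \<le> completion_dist \<phi> (f k) ?g" for k
    using g by (simp add: completion_dist_nonneg cauchy_represents_in_completion in_completion)
  have "(\<lambda>k. inverse (real (Suc k)) + completion_dist \<phi> (\<phi> (a k)) ?g) \<longlonglongrightarrow> 0"
    using tendsto_add[OF LIMSEQ_inverse_real_of_nat completion_dist_tendsto[OF g]] by simp
  then have "(\<lambda>k. completion_dist \<phi> (f k) ?g) \<longlonglongrightarrow> 0"
    by (rule tendsto_sandwich[OF always_eventually[OF allI[OF lower]]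
          always_eventually[OF allI[OF upper]] tendsto_const])
  then show ?thesis
    using g cauchy_represents_in_completion by blast
qed

lemma completion_inner_embed: "completion_inner \<phi> (\<phi> x) (\<phi> y) = \<phi> x y"
  using LIMSEQ_unique[OF tendsto_const completion_inner_lim[OF cauchy_represents_const cauchy_represents_const]]
  by (metis (no_types))

lemma completion_inner_add_left:
  assumes "cauchy_represents \<phi> s f" "cauchy_represents \<phi> t g" "cauchy_represents \<phi> u h"
  shows "completion_inner \<phi> (hadd f g) h = completion_inner \<phi> f h + completion_inner \<phi> g h"
proof (rule LIMSEQ_unique)
  show "(\<lambda>n. \<phi> (s n + t n) (u n)) \<longlonglongrightarrow> completion_inner \<phi> (hadd f g) h"
    using assms by (intro completion_inner_lim cauchy_represents_add)
  show "(\<lambda>n. \<phi> (s n + t n) (u n)) \<longlonglongrightarrow> completion_inner \<phi> f h + completion_inner \<phi> g h"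
    using assms by (simp add: add_left tendsto_add completion_inner_lim)
qed

lemma completion_inner_sc_left:
  assumes "cauchy_represents \<phi> s f" "cauchy_represents \<phi> t g"
  shows "completion_inner \<phi> (hscale c f) g = c * completion_inner \<phi> f g"
proof (rule LIMSEQ_unique)
  show "(\<lambda>n. \<phi> (cq_sc Q c (s n)) (t n)) \<longlonglongrightarrow> completion_inner \<phi> (hscale c f) g"
    using assms by (intro completion_inner_lim cauchy_represents_sc)
  show "(\<lambda>n. \<phi> (cq_sc Q c (s n)) (t n)) \<longlonglongrightarrow> c * completion_inner \<phi> f g"
    using assms by (simp add: sc_left tendsto_mult_left completion_inner_lim)
qed

lemma completion_inner_cnj:
  assumes "cauchy_represents \<phi> s f" "cauchy_represents \<phi> t g"
  shows "completion_inner \<phi> f g = cnj (completion_inner \<phi> g f)"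
proof (rule LIMSEQ_unique)
  show "(\<lambda>n. \<phi> (s n) (t n)) \<longlonglongrightarrow> completion_inner \<phi> f g"
    using assms by (rule completion_inner_lim)
  show "(\<lambda>n. \<phi> (s n) (t n)) \<longlonglongrightarrow> cnj (completion_inner \<phi> g f)"
    using tendsto_cnj[OF completion_inner_lim[OF assms(2,1)]] by (simp add: hermitian[of "t _"])
qed

lemma completion_inner_nonneg:
  assumes "cauchy_represents \<phi> s f"
  shows "0 \<le> completion_inner \<phi> f f"
proof -
  have lim: "(\<lambda>n. \<phi> (s n) (s n)) \<longlonglongrightarrow> completion_inner \<phi> f f"
    using assms assms by (rule completion_inner_lim)
  have "0 \<le> Re (completion_inner \<phi> f f)"
    using LIMSEQ_le_const[OF tendsto_Re[OF lim]] Re_diag_nonneg by blast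
  moreover have "Im (completion_inner \<phi> f f) = 0"
    using LIMSEQ_unique[OF tendsto_Im[OF lim]] Im_diag by simp
  ultimately show ?thesis
    by (simp add: less_eq_complex_def)
qed

lemma completion_inner_eq_0:
  assumes "cauchy_represents \<phi> s f" "completion_inner \<phi> f f = 0"
  shows "f = hzero"
proof
  fix B
  have "(\<lambda>n. form_seminorm \<phi> (s n)) \<longlonglongrightarrow> 0"
    using tendsto_real_sqrt[OF tendsto_Re[OF completion_inner_lim[OF assms(1) assms(1)]]] assms(2)
    by (simp add: form_seminorm_def)
  then have lim: "(\<lambda>n. form_seminorm \<phi> (s n) * form_seminorm \<phi> B) \<longlonglongrightarrow> 0"
    by (rule tendsto_mult_left_zero)
  have bound: "\<forall>n. norm (\<phi> (s n) B) \<le> form_seminorm \<phi> (s n) * form_seminorm \<phi> B"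
    using Cauchy_Schwarz by simp
  have "(\<lambda>n. \<phi> (s n) B) \<longlonglongrightarrow> 0"
    by (rule Lim_null_comparison[OF always_eventually[OF bound] lim])
  moreover have "(\<lambda>n. \<phi> (s n) B) \<longlonglongrightarrow> f B"
    using assms(1) by (simp add: cauchy_represents_def)
  ultimately show "f B = hzero B"
    by (simp add: hzero_def LIMSEQ_unique)
qed

theorem completion_hilbert: "complex_hilbert (form_completion \<phi>) (completion_inner \<phi>)"
  unfolding complex_hilbert_def
proof (intro conjI ballI allI impI)
  have "hzero = \<phi> 0"
    by (simp add: hzero_def zero_left fun_eq_iff)
  then show "hzero \<in> form_completion \<phi>"
    using embed_in_completion[of 0] by simp
next
  fix f g
  assume "f \<in> form_completion \<phi>" "g \<in> form_completion \<phi>"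
  then show "hadd f g \<in> form_completion \<phi>"
    by (meson completion_memE cauchy_represents_add cauchy_represents_in_completion)
next
  fix c f
  assume "f \<in> form_completion \<phi>"
  then show "hscale c f \<in> form_completion \<phi>"
    by (meson completion_memE cauchy_represents_sc cauchy_represents_in_completion)
next
  fix f g h
  assume "f \<in> form_completion \<phi>" "g \<in> form_completion \<phi>" "h \<in> form_completion \<phi>"
  then show "completion_inner \<phi> (hadd f g) h = completion_inner \<phi> f h + completion_inner \<phi> g h"
    by (meson completion_memE completion_inner_add_left)
next
  fix c f g
  assume "f \<in> form_completion \<phi>" "g \<in> form_completion \<phi>"
  then show "completion_inner \<phi> (hscale c f) g = c * completion_inner \<phi> f g"
    by (meson completion_memE completion_inner_sc_left)
next
  fix f g
  assume "f \<in> form_completion \<phi>" "g \<in> form_completion \<phi>"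
  then show "completion_inner \<phi> f g = cnj (completion_inner \<phi> g f)"
    by (meson completion_memE completion_inner_cnj)
next
  fix f
  assume "f \<in> form_completion \<phi>"
  then show "0 \<le> completion_inner \<phi> f f"
    and "completion_inner \<phi> f f = 0 \<Longrightarrow> f = hzero"
    by (meson completion_memE completion_inner_nonneg completion_inner_eq_0)+
next
  fix s :: "nat \<Rightarrow> 'a \<Rightarrow> complex"
  assume "(\<forall>n. s n \<in> form_completion \<phi>) \<and>
    (\<forall>e>0. \<exists>N. \<forall>m\<ge>N. \<forall>n\<ge>N. completion_dist \<phi> (s m) (s n) < e)"
  then show "\<exists>x\<in>form_completion \<phi>. (\<lambda>n. completion_dist \<phi> (s n) x) \<longlonglongrightarrow> 0"
    by (blast intro: completion_complete)
qed

lemma hzero_in_gns_ker: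
  assumes "is_gns Q \<phi> H ip lam rep"
  shows "hzero \<in> gns_ker Q lam rep X \<alpha>"
proof -
  have lam_sc: "\<And>c A. A \<in> cq_A0 Q \<Longrightarrow> lam (cq_sc Q c A) = hscale c (lam A)"
    and rep_sc: "\<And>c A. A \<in> cq_A0 Q \<Longrightarrow> rep X (hscale c (lam A)) = hscale c (rep X (lam A))"
    using assms by (simp_all add: is_gns_def Let_def)
  have hscale_0: "hscale 0 \<xi> = hzero" for \<xi> :: "'a \<Rightarrow> complex"
    by (simp add: hscale_def hzero_def)
  have lam_0: "lam 0 = hzero"
    using lam_sc[OF zero_in_A0, of 0] by (simp add: sc_zero hscale_0)
  then have "rep X hzero = hscale \<alpha> hzero"
    using rep_sc[OF zero_in_A0, of 0] by (simp add: hscale_0 hscale_def hzero_def)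
  moreover have "hzero \<in> lam ` cq_A0 Q"
    using lam_0 zero_in_A0 by (metis image_eqI)
  ultimately show ?thesis
    by (simp add: gns_ker_def)
qed

lemma gns_kernel_imp_eigenvector:
  assumes gns: "is_gns Q \<phi> H ip lam rep" and kernel: "gns_ker Q lam rep X \<alpha> \<noteq> {hzero}"
  shows "\<exists>A\<in>cq_A0 Q. 0 < \<phi> A A \<and> (\<forall>B\<in>cq_A0 Q. \<phi> (cq_mul Q X A - cq_sc Q \<alpha> A) B = 0)"
proof -
  have hilbert: "complex_hilbert H ip"
    and lam_in: "\<And>A. A \<in> cq_A0 Q \<Longrightarrow> lam A \<in> H"
    and lam_inner: "\<And>A B. A \<in> cq_A0 Q \<Longrightarrow> B \<in> cq_A0 Q \<Longrightarrow> ip (lam A) (lam B) = \<phi> A B"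
    and rep_inner: "\<And>A B. A \<in> cq_A0 Q \<Longrightarrow> B \<in> cq_A0 Q \<Longrightarrow>
      ip (rep X (lam A)) (lam B) = \<phi> (cq_mul Q X A) B"
    using gns by (simp_all add: is_gns_def Let_def)
  have ip_sc: "\<And>c x y. x \<in> H \<Longrightarrow> y \<in> H \<Longrightarrow> ip (hscale c x) y = c * ip x y"
    and ip_pos: "\<And>x. x \<in> H \<Longrightarrow> 0 \<le> ip x x"
    and ip_definite: "\<And>x. x \<in> H \<Longrightarrow> ip x x = 0 \<Longrightarrow> x = hzero"
    using hilbert unfolding complex_hilbert_def by blast+
  obtain A where A: "A \<in> cq_A0 Q" "lam A \<noteq> hzero" "rep X (lam A) = hscale \<alpha> (lam A)"
    using kernel hzero_in_gns_ker[OF gns] unfolding gns_ker_def by blast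
  have "0 < \<phi> A A"
    using ip_pos[OF lam_in] ip_definite[OF lam_in] lam_inner A by (metis order_le_neq_trans)
  moreover have "\<phi> (cq_mul Q X A - cq_sc Q \<alpha> A) B = 0" if "B \<in> cq_A0 Q" for B
  proof -
    have "\<phi> (cq_mul Q X A - cq_sc Q \<alpha> A) B = ip (rep X (lam A)) (lam B) - \<alpha> * ip (lam A) (lam B)"
      using A(1) that by (simp add: diff_left sc_left rep_inner lam_inner)
    also have "\<dots> = 0"
      using A(1) that by (simp add: A(3) ip_sc lam_in)
    finally show ?thesis .
  qed
  ultimately show ?thesis
    using A(1) by blast
qed

end

locale P_form = cq_star_algebra +
  fixes \<phi> :: "'a::banach \<Rightarrow> 'a \<Rightarrow> complex"
  assumes P_form: "\<phi> \<in> P_forms Q"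

sublocale P_form \<subseteq> positive_form
  using P_form by unfold_locales (simp_all add: P_forms_def)

definition gns_rep ::
  "('a::banach) cqs \<Rightarrow> ('a \<Rightarrow> 'a \<Rightarrow> complex) \<Rightarrow> 'a \<Rightarrow> ('a \<Rightarrow> complex) \<Rightarrow> 'a \<Rightarrow> complex" where
  "gns_rep Q \<phi> X \<xi> = \<phi> (cq_mul Q X (SOME A. A \<in> cq_A0 Q \<and> \<phi> A = \<xi>))"

context P_form
begin

lemma invariant:
  "A \<in> cq_A0 Q \<Longrightarrow> B \<in> cq_A0 Q \<Longrightarrow> \<phi> (cq_mul Q X A) B = \<phi> A (cq_mul Q (cq_star Q X) B)"
  using P_form by (simp add: P_forms_def)

lemma bounded: obtains \<gamma> where "\<gamma> > 0" "\<And>X Y. cmod (\<phi> X Y) \<le> \<gamma> * norm X * norm Y"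
  using P_form by (auto simp: P_forms_def)

lemma seminorm_le_norm: obtains C where "C > 0" "\<And>x. form_seminorm \<phi> x \<le> C * norm x"
proof -
  obtain \<gamma> where "\<gamma> > 0" and \<gamma>: "\<And>X Y. cmod (\<phi> X Y) \<le> \<gamma> * norm X * norm Y"
    using bounded by blast
  have "form_seminorm \<phi> x \<le> sqrt \<gamma> * norm x" for x
  proof -
    have "Re (\<phi> x x) \<le> \<gamma> * (norm x)\<^sup>2"
      using \<gamma>[of x x] complex_Re_le_cmod[of "\<phi> x x"] by (simp add: power2_eq_square mult.assoc)
    then show ?thesis
      using real_sqrt_le_mono by (fastforce simp: form_seminorm_def real_sqrt_mult)
  qed
  with \<open>\<gamma> > 0\<close> show ?thesis
    by (intro that[of "sqrt \<gamma>"]) auto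
qed

lemma vanishes_if_orthogonal_A0:
  assumes "\<forall>B\<in>cq_A0 Q. \<phi> Z B = 0"
  shows "\<phi> Z B = 0"
proof -
  obtain \<gamma> where \<gamma>: "\<And>X Y. cmod (\<phi> X Y) \<le> \<gamma> * norm X * norm Y"
    using bounded by blast
  obtain s where s: "\<And>n. s n \<in> cq_A0 Q" "s \<longlonglongrightarrow> B"
    using A0_approx_seq by blast
  have "cmod (\<phi> Z B) \<le> \<gamma> * norm Z * norm (B - s n)" for n
    using \<gamma>[of Z "B - s n"] assms s(1) by (simp add: diff_right)
  moreover have "(\<lambda>n. B - s n) \<longlonglongrightarrow> 0"
    using tendsto_diff[OF tendsto_const[of B] s(2)] by simp
  then have "(\<lambda>n. \<gamma> * norm Z * norm (B - s n)) \<longlonglongrightarrow> 0"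
    by (intro tendsto_mult_right_zero tendsto_norm_zero)
  ultimately have "cmod (\<phi> Z B) \<le> 0"
    by (intro tendsto_le[OF trivial_limit_sequentially _ tendsto_const]) auto
  then show ?thesis
    by simp
qed

lemma orthogonal_A0_iff_null: "(\<forall>B\<in>cq_A0 Q. \<phi> Z B = 0) \<longleftrightarrow> \<phi> Z Z = 0"
proof
  show "\<forall>B\<in>cq_A0 Q. \<phi> Z B = 0 \<Longrightarrow> \<phi> Z Z = 0"
    by (rule vanishes_if_orthogonal_A0)
next
  assume "\<phi> Z Z = 0"
  then have "form_seminorm \<phi> Z = 0"
    by (simp add: form_seminorm_def)
  then show "\<forall>B\<in>cq_A0 Q. \<phi> Z B = 0"
    using Cauchy_Schwarz[of Z] by simp
qed

lemma completion_dense: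
  assumes "\<xi> \<in> form_completion \<phi>" "e > 0"
  shows "\<exists>A\<in>cq_A0 Q. completion_dist \<phi> \<xi> (\<phi> A) < e"
proof -
  obtain s where s: "cauchy_represents \<phi> s \<xi>"
    using assms(1) by (rule completion_memE)
  obtain C where "C > 0" and C: "\<And>x. form_seminorm \<phi> x \<le> C * norm x"
    using seminorm_le_norm by blast
  obtain k where k: "completion_dist \<phi> (\<phi> (s k)) \<xi> < e / 2"
    using order_tendstoD(2)[OF completion_dist_tendsto[OF s], of "e / 2"] assms(2)
    by (auto dest: eventually_happens)
  have "e / 2 / C > 0"
    using assms(2) \<open>C > 0\<close> by simp
  then obtain A where A: "A \<in> cq_A0 Q" "dist A (s k) < e / 2 / C"
    using closure_approachable[of "s k" "cq_A0 Q"] closure_A0 by blast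
  have "form_seminorm \<phi> (s k - A) < e / 2"
    using C[of "s k - A"] A(2) \<open>C > 0\<close>
    by (simp add: dist_norm norm_minus_commute pos_less_divide_eq mult.commute)
  moreover have "completion_dist \<phi> \<xi> (\<phi> A)
      \<le> completion_dist \<phi> \<xi> (\<phi> (s k)) + completion_dist \<phi> (\<phi> (s k)) (\<phi> A)"
    using assms(1) by (simp add: completion_dist_triangle embed_in_completion)
  moreover have "completion_dist \<phi> \<xi> (\<phi> (s k)) = completion_dist \<phi> (\<phi> (s k)) \<xi>"
    using assms(1) by (simp add: completion_dist_commute embed_in_completion)
  ultimately show ?thesis
    using A(1) k by (force simp: completion_dist_embed)
qed

lemma embed_mul_cong:
  assumes "A \<in> cq_A0 Q" "A' \<in> cq_A0 Q" "\<phi> A = \<phi> A'"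
  shows "\<phi> (cq_mul Q X A) = \<phi> (cq_mul Q X A')"
proof -
  have "\<phi> (cq_mul Q X A - cq_mul Q X A') B = 0" if "B \<in> cq_A0 Q" for B
  proof -
    have "\<phi> (cq_mul Q X A - cq_mul Q X A') B = \<phi> (A - A') (cq_mul Q (cq_star Q X) B)"
      using assms(1,2) that by (simp add: mul_diff_right[symmetric] invariant diff_in_A0)
    also have "\<dots> = 0"
      using assms(3) by (simp add: diff_left)
    finally show ?thesis .
  qed
  then have "\<phi> (cq_mul Q X A - cq_mul Q X A') B = 0" for B
    by (blast intro: vanishes_if_orthogonal_A0)
  then show ?thesis
    by (simp add: fun_eq_iff diff_left)
qed

lemma gns_rep_embed:
  assumes "A \<in> cq_A0 Q"
  shows "gns_rep Q \<phi> X (\<phi> A) = \<phi> (cq_mul Q X A)"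
proof -
  have "\<exists>A'. A' \<in> cq_A0 Q \<and> \<phi> A' = \<phi> A"
    using assms by blast
  from someI_ex[OF this] show ?thesis
    unfolding gns_rep_def using assms by (blast intro: embed_mul_cong)
qed

theorem is_gns_completion: "is_gns Q \<phi> (form_completion \<phi>) (completion_inner \<phi>) \<phi> (gns_rep Q \<phi>)"
proof -
  have "hadd (\<phi> A) (\<phi> B) = \<phi> (A + B)" "hscale c (\<phi> A) = \<phi> (cq_sc Q c A)" for A B c
    by (simp_all add: fun_eq_iff hadd_def hscale_def add_left sc_left)
  moreover note completion_hilbert completion_dense completion_inner_embed
    gns_rep_embed add_in_A0 sc_in_A0 mul_add_right mul_sc_right
  ultimately show ?thesis
    by (auto simp: is_gns_def Let_def embed_in_completion)
qed

lemma eigenvector_iff_gns_kernel: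
  "(\<exists>A\<in>cq_A0 Q. 0 < \<phi> A A \<and> (\<forall>B\<in>cq_A0 Q. \<phi> (cq_mul Q X A - cq_sc Q \<alpha> A) B = 0)) \<longleftrightarrow>
   (\<exists>H ip lam rep. is_gns Q \<phi> H ip lam rep \<and> gns_ker Q lam rep X \<alpha> \<noteq> {hzero})"
proof
  assume "\<exists>A\<in>cq_A0 Q. 0 < \<phi> A A \<and> (\<forall>B\<in>cq_A0 Q. \<phi> (cq_mul Q X A - cq_sc Q \<alpha> A) B = 0)"
  then obtain A where A: "A \<in> cq_A0 Q" "0 < \<phi> A A"
    and eigen: "\<forall>B\<in>cq_A0 Q. \<phi> (cq_mul Q X A - cq_sc Q \<alpha> A) B = 0"
    by blast
  have "gns_rep Q \<phi> X (\<phi> A) = hscale \<alpha> (\<phi> A)"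
    using vanishes_if_orthogonal_A0[OF eigen] A(1)
    by (simp add: gns_rep_embed fun_eq_iff hscale_def diff_left sc_left)
  moreover have "\<phi> A \<noteq> hzero"
    using A(2) by (auto simp: hzero_def)
  ultimately have "gns_ker Q \<phi> (gns_rep Q \<phi>) X \<alpha> \<noteq> {hzero}"
    using A(1) by (auto simp: gns_ker_def)
  then show "\<exists>H ip lam rep. is_gns Q \<phi> H ip lam rep \<and> gns_ker Q lam rep X \<alpha> \<noteq> {hzero}"
    using is_gns_completion by blast
qed (blast intro: gns_kernel_imp_eigenvector)

end

theorem proposition4p11:
  fixes Q :: "('a::banach) cqs" and X :: 'a and \<alpha> :: complex
  assumes "cq_algebra Q" and "star_semisimple Q"
  shows "(gen_eigenvalue Q X \<alpha> \<longleftrightarrow>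
           (\<exists>\<phi>\<in>P_forms Q. \<phi> \<noteq> (\<lambda>_ _. 0) \<and>
              (\<exists>A\<in>cq_A0 Q. 0 < \<phi> A A \<and>
                 \<phi> (cq_mul Q X A - cq_sc Q \<alpha> A) (cq_mul Q X A - cq_sc Q \<alpha> A) = 0))) \<and>
         (gen_eigenvalue Q X \<alpha> \<longleftrightarrow>
           (\<exists>\<phi>\<in>P_forms Q. \<phi> \<noteq> (\<lambda>_ _. 0) \<and>
              (\<exists>H ip lam rep. is_gns Q \<phi> H ip lam rep \<and> gns_ker Q lam rep X \<alpha> \<noteq> {hzero})))"
proof -
  have P_form: "P_form Q \<phi>" if "\<phi> \<in> P_forms Q" for \<phi>
    using assms(1) that by (intro P_form.intro cq_star_algebra.intro P_form_axioms.intro)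
  show ?thesis
    unfolding gen_eigenvalue_def
    using P_form.orthogonal_A0_iff_null[OF P_form] P_form.eigenvector_iff_gns_kernel[OF P_form]
    by (auto 0 4)
qed

end
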